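(* Let $p$ be an odd prime and let $k$ be an integer with $2\le k\le p-1$. Let $k^{-1}$ denote the least non-negative integer congruent to the inverse of $k$ modulo $p$, and let $K=\min\{k,k^{-1}\}$. Let $\phi$ be the orthomorphism of $\mathbb{Z}_p$ given by $\phi(x)=kx$, and let $\phi'$ be any orthomorphism of $\mathbb{Z}_p$ with $\phi'\neq\phi$. Then the number of $x\in\mathbb{Z}_p$ with $\phi(x)\neq\phi'(x)$ is at least $\log_K(p)+1$.
   Context: An orthomorphism of the cyclic group $\mathbb{Z}_p$ is a permutation $\psi$ of $\mathbb{Z}_p$ such that the map $x\mapsto \psi(x)-x$ (computed modulo $p$) is also a permutation of $\mathbb{Z}_p$. The distance between two orthomorphisms is the number of $x$ at which they differ. *)

theory Defs
  imports "HOL-Number_Theory.Number_Theory"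
begin

text \<open>We model Z_p as the carrier set {0..<p} of natural numbers with arithmetic mod p.\<close>

definition orthomorphism :: "nat \<Rightarrow> (nat \<Rightarrow> nat) \<Rightarrow> bool" where
  "orthomorphism p \<psi> \<longleftrightarrow>
     bij_betw \<psi> {0..<p} {0..<p} \<and>
     bij_betw (\<lambda>x. (\<psi> x + p - x) mod p) {0..<p} {0..<p}"

definition orth_dist :: "nat \<Rightarrow> (nat \<Rightarrow> nat) \<Rightarrow> (nat \<Rightarrow> nat) \<Rightarrow> nat" where
  "orth_dist p \<psi> \<psi>' = card {x \<in> {0..<p}. \<psi> x \<noteq> \<psi>' x}"

definition inv_mod :: "nat \<Rightarrow> nat \<Rightarrow> nat" where
  "inv_mod p k = (LEAST j. [k * j = 1] (mod p))"

end

theory Submission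
  imports Defs "HOL-Library.FuncSet"
begin

text \<open>
  Let \<open>S\<close> be the set where \<open>\<phi>'\<close> differs from \<open>x \<mapsto> k x\<close>. The bijections \<open>\<phi>'\<close> and
  \<open>x \<mapsto> \<phi>' x - x\<close> agree with \<open>x \<mapsto> k x\<close> and \<open>x \<mapsto> (k - 1) x\<close> off \<open>S\<close>, so they map \<open>S\<close>
  onto \<open>k S\<close> and \<open>(k - 1) S\<close>. Hence every \<open>a \<in> S\<close> satisfies \<open>k a = x + (k - 1) b\<close> (mod \<open>p\<close>)
  for some \<open>x, b \<in> S\<close> with \<open>x \<noteq> a\<close>, and, after multiplying by the inverse \<open>i\<close> of \<open>k\<close>, every
  \<open>x \<in> S\<close> satisfies \<open>i x = a + (i - 1) b\<close> for some \<open>a, b \<in> S\<close> with \<open>a \<noteq> x\<close>.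

  Such a recurrence \<open>K y = \<alpha> y + (K - 1) \<beta> y\<close> on \<open>S\<close> forces \<open>p \<le> K ^ (card S - 1)\<close>. Pass to a
  minimal closed subset \<open>C\<close>, in which every point reaches a fixed \<open>r\<close>. Replacing \<open>K\<close> copies of
  \<open>y - r\<close> by \<open>(\<alpha> y - r) + (K - 1) (\<beta> y - r)\<close> reduces any non-negative combination of the
  \<open>y - r\<close> modulo \<open>p\<close> to one with all coefficients below \<open>K\<close>; this terminates because a
  potential that grows by a factor \<open>K + 1\<close> per step towards \<open>r\<close> decreases. Since every residue
  is a multiple of some \<open>y - r \<noteq> 0\<close>, all \<open>p\<close> residues occur among the \<open>K ^ (card C - 1)\<close>
  reduced combinations.
\<close>

lemma sum_if_eq_times:
  fixes F :: "'a \<Rightarrow> 'b::comm_semiring_0"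
  assumes "finite V"
  shows "(\<Sum>z\<in>V. (if z = a then t else 0) * F z) = (if a \<in> V then t * F a else 0)"
  using assms by (simp add: if_distrib[of "\<lambda>u. u * _"] sum.delta cong: if_cong)

lemma congruent_digit_expansion:
  fixes V :: "'a set" and w :: "'a \<Rightarrow> int" and h :: "'a \<Rightarrow> nat" and \<alpha> \<beta> :: "'a \<Rightarrow> 'a"
  assumes fin: "finite V"
    and w_out: "\<And>z. z \<notin> V \<Longrightarrow> w z = 0" and h_out: "\<And>z. z \<notin> V \<Longrightarrow> h z = 0"
    and w_rel: "\<And>y. y \<in> V \<Longrightarrow> [int K * w y = w (\<alpha> y) + (int K - 1) * w (\<beta> y)] (mod m)"
    and h_dec: "\<And>y. y \<in> V \<Longrightarrow> h (\<alpha> y) + (K - 1) * h (\<beta> y) < K * h y"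
  shows "\<exists>d. (\<forall>z\<in>V. d z < K) \<and> [(\<Sum>z\<in>V. int (d z) * w z) = (\<Sum>z\<in>V. int (c z) * w z)] (mod m)"
proof (induction "\<Sum>z\<in>V. c z * h z" arbitrary: c rule: less_induct)
  case less
  show ?case
  proof (cases "\<forall>z\<in>V. c z < K")
    case True
    then show ?thesis by (blast intro: cong_refl)
  next
    case False
    then obtain y where y: "y \<in> V" "K \<le> c y" by (auto simp: not_less)
    have "K \<noteq> 0" using h_dec[OF y(1)] by (cases K) auto
    define c' where "c' z = c z + (if z = \<alpha> y then 1 else 0) + (if z = \<beta> y then K - 1 else 0)
        - (if z = y then K else 0)" for z
    have sum_c': "(\<Sum>z\<in>V. int (c' z) * F z)
        = (\<Sum>z\<in>V. int (c z) * F z) + (F (\<alpha> y) + (int K - 1) * F (\<beta> y)) - int K * F y"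
      if F_out: "\<And>z. z \<notin> V \<Longrightarrow> F z = 0" for F :: "'a \<Rightarrow> int"
    proof -
      have c'_int: "int (c' z) = int (c z) + (if z = \<alpha> y then 1 else 0) + (if z = \<beta> y then int K - 1 else 0)
          - (if z = y then int K else 0)" for z
        using y(2) \<open>K \<noteq> 0\<close> by (auto simp: c'_def)
      have "(\<Sum>z\<in>V. int (c' z) * F z) = (\<Sum>z\<in>V. int (c z) * F z
          + (if z = \<alpha> y then 1 else 0) * F z + (if z = \<beta> y then int K - 1 else 0) * F z
          - (if z = y then int K else 0) * F z)"
        by (intro sum.cong refl) (simp add: c'_int algebra_simps)
      then show ?thesis
        using F_out by (simp add: sum.distrib sum_subtractf sum_if_eq_times[OF fin] y(1))
    qed
    have "int (\<Sum>z\<in>V. c' z * h z) = (\<Sum>z\<in>V. int (c' z) * int (h z))" by simp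
    also have "\<dots> = (\<Sum>z\<in>V. int (c z) * int (h z))
        + (int (h (\<alpha> y)) + (int K - 1) * int (h (\<beta> y))) - int K * int (h y)"
      by (rule sum_c') (simp add: h_out)
    also have "\<dots> < (\<Sum>z\<in>V. int (c z) * int (h z))"
    proof -
      have "int (h (\<alpha> y) + (K - 1) * h (\<beta> y)) < int (K * h y)"
        using h_dec[OF y(1)] by (simp only: of_nat_less_iff)
      then show ?thesis using \<open>K \<noteq> 0\<close> by (simp add: of_nat_diff)
    qed
    also have "\<dots> = int (\<Sum>z\<in>V. c z * h z)" by simp
    finally have decreases: "(\<Sum>z\<in>V. c' z * h z) < (\<Sum>z\<in>V. c z * h z)" by (simp only: of_nat_less_iff)
    obtain d where d: "\<forall>z\<in>V. d z < K"
        "[(\<Sum>z\<in>V. int (d z) * w z) = (\<Sum>z\<in>V. int (c' z) * w z)] (mod m)"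
      using less.hyps[OF decreases] by blast
    have "(\<Sum>z\<in>V. int (c' z) * w z)
        = (\<Sum>z\<in>V. int (c z) * w z) + (w (\<alpha> y) + (int K - 1) * w (\<beta> y)) - int K * w y"
      by (rule sum_c'[OF w_out])
    also have "[\<dots> = (\<Sum>z\<in>V. int (c z) * w z) + int K * w y - int K * w y] (mod m)"
      by (intro cong_diff cong_add cong_refl cong_sym[OF w_rel[OF y(1)]])
    finally have "[(\<Sum>z\<in>V. int (c' z) * w z) = (\<Sum>z\<in>V. int (c z) * w z)] (mod m)" by simp
    then show ?thesis using d(1) cong_trans[OF d(2)] by blast
  qed
qed

lemma prime_le_power_card_if_digit_expansions:
  fixes V :: "'a set" and w :: "'a \<Rightarrow> int" and p K :: nat
  assumes p: "prime p" and fin: "finite V" and y: "y \<in> V" "\<not> int p dvd w y"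
    and expand: "\<And>c. \<exists>d. (\<forall>z\<in>V. d z < K)
        \<and> [(\<Sum>z\<in>V. int (d z) * w z) = (\<Sum>z\<in>V. int (c z) * w z)] (mod int p)"
  shows "p \<le> K ^ card V"
proof -
  define residue where "residue d = nat ((\<Sum>z\<in>V. int (d z) * w z) mod int p)" for d :: "'a \<Rightarrow> nat"
  have "{0..<p} \<subseteq> residue ` (V \<rightarrow>\<^sub>E {..<K})"
  proof
    fix t assume t: "t \<in> {0..<p}"
    have "coprime (w y) (int p)"
      using p y(2) by (simp add: prime_imp_coprime coprime_commute)
    then obtain u where u: "[w y * u = 1] (mod int p)" using cong_solve_coprime_int by blast
    define m where "m = nat (u * int t mod int p)"
    have "[int m * w y = (u * int t) * w y] (mod int p)"
      using p by (simp add: m_def cong_def mod_mult_left_eq prime_gt_0_nat)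
    also have "(u * int t) * w y = (w y * u) * int t" by (simp add: algebra_simps)
    also have "[\<dots> = 1 * int t] (mod int p)" by (intro cong_mult u cong_refl)
    finally have m: "[int m * w y = int t] (mod int p)" by simp
    obtain d where d: "\<forall>z\<in>V. d z < K"
        "[(\<Sum>z\<in>V. int (d z) * w z) = (\<Sum>z\<in>V. int (if z = y then m else 0) * w z)] (mod int p)"
      using expand[of "\<lambda>z. if z = y then m else 0"] by blast
    have "(\<Sum>z\<in>V. int (if z = y then m else 0) * w z) = (\<Sum>z\<in>V. (if z = y then int m else 0) * w z)"
      by (intro sum.cong) auto
    also have "\<dots> = int m * w y" by (simp only: sum_if_eq_times[OF fin] y(1) if_True)
    finally have "[(\<Sum>z\<in>V. int (restrict d V z) * w z) = int t] (mod int p)"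
      using d(2) m by (simp add: cong_trans)
    then have "residue (restrict d V) = t"
      using t by (simp add: residue_def cong_def)
    moreover have "restrict d V \<in> V \<rightarrow>\<^sub>E {..<K}" using d(1) by simp
    ultimately show "t \<in> residue ` (V \<rightarrow>\<^sub>E {..<K})" by blast
  qed
  moreover have digits_finite: "finite (V \<rightarrow>\<^sub>E {..<K})" using fin by (simp add: finite_PiE)
  ultimately have "card {0..<p} \<le> card (residue ` (V \<rightarrow>\<^sub>E {..<K}))"
    by (intro card_mono finite_imageI)
  also have "\<dots> \<le> card (V \<rightarrow>\<^sub>E {..<K})" by (rule card_image_le[OF digits_finite])
  also have "\<dots> = K ^ card V" using fin by (simp add: card_PiE)
  finally show ?thesis by simp
qed

lemma closed_subset_reaching_point:
  fixes S :: "'a set" and E :: "'a \<Rightarrow> 'a \<Rightarrow> bool"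
  assumes "finite S" "S \<noteq> {}" "\<And>y z. y \<in> S \<Longrightarrow> E y z \<Longrightarrow> z \<in> S"
  obtains C r where "C \<subseteq> S" "r \<in> C" "\<And>y z. y \<in> C \<Longrightarrow> E y z \<Longrightarrow> z \<in> C"
    "\<And>y. y \<in> C \<Longrightarrow> E\<^sup>*\<^sup>* y r"
proof -
  define invariant where "invariant C \<longleftrightarrow> C \<subseteq> S \<and> C \<noteq> {} \<and> (\<forall>y\<in>C. \<forall>z. E y z \<longrightarrow> z \<in> C)" for C
  have "invariant S" using assms by (auto simp: invariant_def)
  then obtain C where C: "invariant C" and minimal: "\<And>C'. invariant C' \<Longrightarrow> card C \<le> card C'"
    using ex_has_least_nat[of invariant S card] by blast
  then obtain r where r: "r \<in> C" by (auto simp: invariant_def)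
  have "finite C" using C \<open>finite S\<close> by (auto simp: invariant_def intro: finite_subset)
  \<comment> \<open>The points reachable from any \<open>y \<in> C\<close> form an invariant subset, so by minimality all of \<open>C\<close>.\<close>
  have "E\<^sup>*\<^sup>* y r" if "y \<in> C" for y
  proof -
    have reach_C: "{z. E\<^sup>*\<^sup>* y z} \<subseteq> C"
    proof
      fix z assume "z \<in> {z. E\<^sup>*\<^sup>* y z}"
      then have "E\<^sup>*\<^sup>* y z" by simp
      then show "z \<in> C"
        by (induction rule: rtranclp_induct) (use that C in \<open>auto simp: invariant_def\<close>)
    qed
    then have "invariant {z. E\<^sup>*\<^sup>* y z}"
      using C by (auto simp: invariant_def intro: rtranclp.rtrancl_into_rtrancl)
    then have "{z. E\<^sup>*\<^sup>* y z} = C"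
      using reach_C minimal \<open>finite C\<close> by (simp add: card_seteq)
    then show ?thesis using r by blast
  qed
  moreover have "C \<subseteq> S" "\<And>y z. y \<in> C \<Longrightarrow> E y z \<Longrightarrow> z \<in> C" using C by (auto simp: invariant_def)
  ultimately show thesis using that r by blast
qed

lemma rank_towards_point:
  fixes E :: "'a \<Rightarrow> 'a \<Rightarrow> bool"
  assumes "\<And>y. y \<in> C \<Longrightarrow> E\<^sup>*\<^sup>* y r"
  obtains rank :: "'a \<Rightarrow> nat" where "rank r = 0"
    "\<And>y. y \<in> C \<Longrightarrow> y \<noteq> r \<Longrightarrow> \<exists>z. E y z \<and> rank z < rank y"
proof -
  define rank where "rank y = (LEAST n. (E ^^ n) y r)" for y
  have "rank r = 0" unfolding rank_def by (rule Least_eq_0) simp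
  moreover have "\<exists>z. E y z \<and> rank z < rank y" if y: "y \<in> C" "y \<noteq> r" for y
  proof -
    obtain n where "(E ^^ n) y r" using rtranclp_imp_relpowp[OF assms[OF y(1)]] by blast
    then have path: "(E ^^ rank y) y r" unfolding rank_def by (rule LeastI)
    then obtain n where n: "rank y = Suc n" using y(2) by (cases "rank y") auto
    then obtain z where "E y z" "(E ^^ n) z r" using path relpowp_Suc_D2[of n E y r] by auto
    moreover from this(2) have "rank z \<le> n" unfolding rank_def by (rule Least_le)
    ultimately show ?thesis using n by auto
  qed
  ultimately show thesis using that by blast
qed

lemma exponential_potential_step:
  fixes K D a b c :: nat
  assumes K: "2 \<le> K" and "c \<le> D" and closer: "a < c \<or> b < c"
  shows "((K + 1) ^ D - (K + 1) ^ (D - a)) + (K - 1) * ((K + 1) ^ D - (K + 1) ^ (D - b))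
    < K * ((K + 1) ^ D - (K + 1) ^ (D - c))"
proof -
  define H where "H = (K + 1) ^ D"
  define G where "G n = (K + 1) ^ (D - n)" for n
  have G_le: "G n \<le> H" for n by (simp add: G_def H_def power_increasing)
  have G_pos: "1 \<le> G n" for n by (simp add: G_def)
  have G_closer: "(K + 1) * G c \<le> G n" if "n < c" for n
  proof -
    have "(K + 1) * G c = (K + 1) ^ Suc (D - c)" by (simp add: G_def)
    also have "\<dots> \<le> G n" unfolding G_def using that \<open>c \<le> D\<close> by (intro power_increasing) auto
    finally show ?thesis .
  qed
  have "K * G c < G a + (K - 1) * G b"
    using closer
  proof
    assume "a < c"
    then have "K * G c < G a" using G_closer[of a] G_pos[of c] by simp
    then show ?thesis by simp
  next
    assume "b < c"
    have "2 * K \<le> K * K" using mult_le_mono1[OF K] .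
    moreover have "(K - 1) * (K + 1) = K * K - 1" by (simp add: algebra_simps)
    ultimately have "K \<le> (K - 1) * (K + 1)" by linarith
    then have "K * G c \<le> (K - 1) * ((K + 1) * G c)" by (metis mult.assoc mult_le_mono1)
    also have "\<dots> \<le> (K - 1) * G b" using G_closer[OF \<open>b < c\<close>] by simp
    finally show ?thesis using G_pos[of a] by simp
  qed
  moreover have "K * G c \<le> K * H" "(K - 1) * G b \<le> (K - 1) * H"
    using G_le by (simp_all add: mult_le_mono2)
  moreover have "K * H = H + (K - 1) * H" using K by (simp add: algebra_simps)
  ultimately have "(H - G a) + (K - 1) * (H - G b) < K * (H - G c)"
    unfolding diff_mult_distrib2 using G_le[of a] by linarith
  then show ?thesis by (simp add: H_def G_def)
qed

lemma prime_le_power_of_rooted_recurrence: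
  fixes p K r :: nat and C :: "nat set" and rank :: "nat \<Rightarrow> nat"
  assumes p: "prime p" and C: "C \<subseteq> {0..<p}" "r \<in> C" and K: "2 \<le> K"
    and closed: "\<And>y. y \<in> C \<Longrightarrow> \<alpha> y \<in> C \<and> \<beta> y \<in> C"
    and recurrence: "\<And>y. y \<in> C \<Longrightarrow> [K * y = \<alpha> y + (K - 1) * \<beta> y] (mod p)"
    and "\<alpha> r \<noteq> r"
    and rank: "rank r = 0" "\<And>y. y \<in> C \<Longrightarrow> y \<noteq> r \<Longrightarrow> rank (\<alpha> y) < rank y \<or> rank (\<beta> y) < rank y"
  shows "p \<le> K ^ (card C - 1)"
proof -
  have "finite C" using C(1) finite_subset by blast
  \<comment> \<open>Shift the recurrence so that \<open>r\<close> becomes \<open>0\<close>; then terms landing on \<open>r\<close> disappear.\<close>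
  define V where "V = C - {r}"
  define w where "w z = (if z \<in> V then int z - int r else 0)" for z
  define D where "D = Max (rank ` C)"
  define h where "h z = (if z \<in> V then (K + 1) ^ D - (K + 1) ^ (D - rank z) else 0)" for z
  have w_C: "w z = int z - int r" and h_C: "h z = (K + 1) ^ D - (K + 1) ^ (D - rank z)" if "z \<in> C" for z
    using that rank(1) by (auto simp: w_def h_def V_def)
  have expansion: "\<exists>d. (\<forall>z\<in>V. d z < K)
      \<and> [(\<Sum>z\<in>V. int (d z) * w z) = (\<Sum>z\<in>V. int (c z) * w z)] (mod int p)" for c
  proof (rule congruent_digit_expansion)
    show "[int K * w y = w (\<alpha> y) + (int K - 1) * w (\<beta> y)] (mod int p)" if "y \<in> V" for y
    proof -
      have y: "y \<in> C" using that by (simp add: V_def)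
      have "[int K * int y = int (\<alpha> y) + (int K - 1) * int (\<beta> y)] (mod int p)"
        using recurrence[OF y] K by (simp add: cong_int_iff[symmetric] of_nat_diff)
      then have "[int K * int y - int K * int r
          = int (\<alpha> y) + (int K - 1) * int (\<beta> y) - (1 + (int K - 1)) * int r] (mod int p)"
        by (simp add: cong_diff)
      then show ?thesis using y closed[OF y] by (simp add: w_C algebra_simps)
    qed
    show "h (\<alpha> y) + (K - 1) * h (\<beta> y) < K * h y" if "y \<in> V" for y
    proof -
      have y: "y \<in> C" "y \<noteq> r" using that by (auto simp: V_def)
      have "rank y \<le> D" unfolding D_def using \<open>finite C\<close> y(1) by simp
      then show ?thesis
        using exponential_potential_step[OF K _ rank(2)[OF y]] closed[OF y(1)] y(1) by (simp add: h_C)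
    qed
  qed (use \<open>finite C\<close> in \<open>auto simp: V_def w_def h_def\<close>)
  have "\<alpha> r \<in> V" using closed C(2) \<open>\<alpha> r \<noteq> r\<close> by (auto simp: V_def)
  moreover have "\<not> int p dvd w (\<alpha> r)"
  proof
    assume "int p dvd w (\<alpha> r)"
    then have "[\<alpha> r = r] (mod p)"
      using C(2) \<open>\<alpha> r \<in> V\<close> by (simp add: w_C V_def cong_iff_dvd_diff cong_int_iff[symmetric])
    then show False using \<open>\<alpha> r \<noteq> r\<close> closed C by (auto simp: cong_def subset_iff)
  qed
  ultimately have "p \<le> K ^ card V"
    using prime_le_power_card_if_digit_expansions[OF p _ _ _ expansion] \<open>finite C\<close> V_def by blast
  then show ?thesis using C(2) \<open>finite C\<close> by (simp add: V_def)
qed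

lemma prime_le_power_of_recurrence:
  fixes p K :: nat and S :: "nat set"
  assumes p: "prime p" and S: "S \<subseteq> {0..<p}" "S \<noteq> {}" and K: "2 \<le> K"
    and recurrence: "\<And>y. y \<in> S \<Longrightarrow> \<exists>a\<in>S. \<exists>b\<in>S. a \<noteq> y \<and> [K * y = a + (K - 1) * b] (mod p)"
  shows "p \<le> K ^ (card S - 1)"
proof -
  obtain \<alpha> \<beta> where \<alpha>\<beta>: "\<And>y. y \<in> S \<Longrightarrow> \<alpha> y \<in> S \<and> \<beta> y \<in> S \<and> \<alpha> y \<noteq> y
      \<and> [K * y = \<alpha> y + (K - 1) * \<beta> y] (mod p)"
    using recurrence by metis
  have "finite S" using S(1) finite_subset by blast
  define E where "E y z \<longleftrightarrow> z = \<alpha> y \<or> z = \<beta> y" for y z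
  obtain C r where C: "C \<subseteq> S" "r \<in> C" "\<And>y z. y \<in> C \<Longrightarrow> E y z \<Longrightarrow> z \<in> C"
      and reach: "\<And>y. y \<in> C \<Longrightarrow> E\<^sup>*\<^sup>* y r"
    by (rule closed_subset_reaching_point[OF \<open>finite S\<close> S(2), of E]) (auto simp: E_def dest: \<alpha>\<beta>)
  obtain rank :: "nat \<Rightarrow> nat" where rank: "rank r = 0"
      "\<And>y. y \<in> C \<Longrightarrow> y \<noteq> r \<Longrightarrow> \<exists>z. E y z \<and> rank z < rank y"
    using rank_towards_point[OF reach] by blast
  have "p \<le> K ^ (card C - 1)"
  proof (rule prime_le_power_of_rooted_recurrence[OF p _ C(2) K])
    show "C \<subseteq> {0..<p}" using C(1) S(1) by blast
    show "\<alpha> y \<in> C \<and> \<beta> y \<in> C" if "y \<in> C" for y using C(3)[OF that] by (auto simp: E_def)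
    show "[K * y = \<alpha> y + (K - 1) * \<beta> y] (mod p)" if "y \<in> C" for y
      using \<alpha>\<beta> C(1) that by auto
    show "\<alpha> r \<noteq> r" using \<alpha>\<beta> C(1,2) by auto
    show "rank r = 0" by (fact rank(1))
    show "rank (\<alpha> y) < rank y \<or> rank (\<beta> y) < rank y" if "y \<in> C" "y \<noteq> r" for y
      using rank(2)[OF that] by (auto simp: E_def)
  qed
  also have "\<dots> \<le> K ^ (card S - 1)"
    using K C(1) \<open>finite S\<close> by (intro power_increasing diff_le_mono card_mono) auto
  finally show ?thesis .
qed

lemma coprime_of_less_prime: "prime p \<Longrightarrow> 0 < c \<Longrightarrow> c < p \<Longrightarrow> coprime c (p::nat)"
  by (metis coprime_commute dvd_imp_le not_le prime_imp_coprime)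

lemma bij_betw_mult_mod:
  fixes c p :: nat
  assumes "coprime c p"
  shows "bij_betw (\<lambda>x. c * x mod p) {0..<p} {0..<p}"
proof -
  have inj: "inj_on (\<lambda>x. c * x mod p) {0..<p}"
  proof (rule inj_onI)
    fix x y assume "x \<in> {0..<p}" "y \<in> {0..<p}" "c * x mod p = c * y mod p"
    then show "x = y" using cong_mult_lcancel_nat[OF assms] by (auto simp: cong_def)
  qed
  moreover have "(\<lambda>x. c * x mod p) ` {0..<p} = {0..<p}"
    by (rule endo_inj_surj[OF _ _ inj]) auto
  ultimately show ?thesis by (simp add: bij_betw_def)
qed

lemma bij_betw_image_eq_if_eq_outside:
  assumes "bij_betw f A B" "bij_betw g A B" "S \<subseteq> A" "\<And>x. x \<in> A - S \<Longrightarrow> f x = g x"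
  shows "f ` S = g ` S"
proof -
  have image_eq: "u ` S = B - u ` (A - S)" if "bij_betw u A B" for u
    using that assms(3) by (auto simp: bij_betw_def inj_on_def)
  have "f ` (A - S) = g ` (A - S)" using assms(4) by (rule image_cong[OF refl])
  then show ?thesis using image_eq[OF assms(1)] image_eq[OF assms(2)] by simp
qed

lemma orthomorphism_disagreement_relations:
  fixes p k :: nat and \<phi> :: "nat \<Rightarrow> nat"
  assumes orth: "orthomorphism p \<phi>" and k: "0 < k" "coprime k p" "coprime (k - 1) p"
  defines "S \<equiv> {x \<in> {0..<p}. \<phi> x \<noteq> k * x mod p}"
  shows "\<forall>a\<in>S. \<exists>x\<in>S. \<exists>b\<in>S. x \<noteq> a \<and> [k * a = x + (k - 1) * b] (mod p)"
    and "\<forall>x\<in>S. \<exists>a\<in>S. \<exists>b\<in>S. a \<noteq> x \<and> [k * a = x + (k - 1) * b] (mod p)"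
proof -
  define \<psi> where "\<psi> x = (\<phi> x + p - x) mod p" for x
  have bij: "bij_betw \<phi> {0..<p} {0..<p}" "bij_betw \<psi> {0..<p} {0..<p}"
    using orth by (auto simp: orthomorphism_def \<psi>_def[abs_def])
  have S: "S \<subseteq> {0..<p}" by (auto simp: S_def)
  have \<psi>_outside: "\<psi> x = (k - 1) * x mod p" if "x \<in> {0..<p} - S" for x
  proof -
    have x: "x < p" "\<phi> x = k * x mod p" using that by (auto simp: S_def)
    then have "\<psi> x = (k * x mod p + (p - x)) mod p" by (simp add: \<psi>_def)
    also have "\<dots> = (k * x + (p - x)) mod p" by (simp add: mod_add_left_eq)
    also have "k * x + (p - x) = (k - 1) * x + p"
      using x(1) k(1) by (simp add: diff_mult_distrib)
    finally show ?thesis by simp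
  qed
  have \<phi>_image: "\<phi> ` S = (\<lambda>x. k * x mod p) ` S"
    by (rule bij_betw_image_eq_if_eq_outside[OF bij(1) bij_betw_mult_mod[OF k(2)] S])
       (auto simp: S_def)
  have \<psi>_image: "\<psi> ` S = (\<lambda>x. (k - 1) * x mod p) ` S"
    by (rule bij_betw_image_eq_if_eq_outside[OF bij(2) bij_betw_mult_mod[OF k(3)] S \<psi>_outside])
  have relation: "a \<noteq> x \<and> [k * a = x + (k - 1) * b] (mod p)"
    if "x \<in> S" "\<phi> x = k * a mod p" "\<psi> x = (k - 1) * b mod p" for x a b
  proof
    show "a \<noteq> x" using that(1,2) by (auto simp: S_def)
    have "[x + (k - 1) * b = x + \<psi> x] (mod p)"
      using that(3) by (simp add: cong_def mod_add_right_eq)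
    also have "[x + \<psi> x = \<phi> x] (mod p)"
      using that(1) S by (auto simp: cong_def \<psi>_def mod_add_right_eq)
    finally show "[k * a = x + (k - 1) * b] (mod p)"
      using that(2) by (simp add: cong_def)
  qed
  show "\<forall>a\<in>S. \<exists>x\<in>S. \<exists>b\<in>S. x \<noteq> a \<and> [k * a = x + (k - 1) * b] (mod p)"
  proof
    fix a assume "a \<in> S"
    then have "k * a mod p \<in> \<phi> ` S" unfolding \<phi>_image by (rule imageI)
    then obtain x where x: "x \<in> S" "\<phi> x = k * a mod p" by auto
    then have "\<psi> x \<in> (\<lambda>x. (k - 1) * x mod p) ` S" unfolding \<psi>_image[symmetric] by (intro imageI x(1))
    then obtain b where b: "b \<in> S" "\<psi> x = (k - 1) * b mod p" by auto
    show "\<exists>x\<in>S. \<exists>b\<in>S. x \<noteq> a \<and> [k * a = x + (k - 1) * b] (mod p)"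
      using x(1) b(1) relation[OF x b(2)] by (intro bexI[of _ x] bexI[of _ b]) auto
  qed
  show "\<forall>x\<in>S. \<exists>a\<in>S. \<exists>b\<in>S. a \<noteq> x \<and> [k * a = x + (k - 1) * b] (mod p)"
  proof
    fix x assume x: "x \<in> S"
    then have "\<phi> x \<in> (\<lambda>x. k * x mod p) ` S" unfolding \<phi>_image[symmetric] by (rule imageI)
    then obtain a where a: "a \<in> S" "\<phi> x = k * a mod p" by auto
    have "\<psi> x \<in> (\<lambda>x. (k - 1) * x mod p) ` S" using x unfolding \<psi>_image[symmetric] by (rule imageI)
    then obtain b where b: "b \<in> S" "\<psi> x = (k - 1) * b mod p" by auto
    show "\<exists>a\<in>S. \<exists>b\<in>S. a \<noteq> x \<and> [k * a = x + (k - 1) * b] (mod p)"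
      using a(1) b(1) relation[OF x a(2) b(2)] by (intro bexI[of _ a] bexI[of _ b]) auto
  qed
qed

lemma inv_mod_cong:
  assumes "coprime k p"
  shows "[k * inv_mod p k = 1] (mod p)"
proof -
  have "\<exists>j. [k * j = 1] (mod p)" using cong_solve_coprime_nat[OF assms] by simp
  then show ?thesis unfolding inv_mod_def by (rule LeastI_ex)
qed

lemma two_le_inv_mod:
  assumes "coprime k p" "2 \<le> k" "k < p"
  shows "2 \<le> inv_mod p k"
proof (rule ccontr)
  assume "\<not> 2 \<le> inv_mod p k"
  then have "inv_mod p k = 0 \<or> inv_mod p k = 1" by auto
  then show False using inv_mod_cong[OF assms(1)] assms(2,3) by (auto simp: cong_def)
qed

lemma cong_rearrange_by_inverse:
  fixes k i a b x p :: nat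
  assumes "[k * i = 1] (mod p)" "1 \<le> k" "1 \<le> i" "[k * a = x + (k - 1) * b] (mod p)"
  shows "[i * x = a + (i - 1) * b] (mod p)"
proof -
  have "int i * int x - (int a + (int i - 1) * int b)
      = (int k * int i - 1) * (int a - int b) - int i * (int k * int a - (int x + (int k - 1) * int b))"
    by (simp add: algebra_simps)
  moreover have "int p dvd int k * int i - 1"
    using assms(1) by (simp add: cong_int_iff[symmetric] cong_iff_dvd_diff)
  moreover have "int p dvd int k * int a - (int x + (int k - 1) * int b)"
    using assms(2,4) by (simp add: cong_int_iff[symmetric] cong_iff_dvd_diff of_nat_diff)
  ultimately have "int p dvd int i * int x - (int a + (int i - 1) * int b)"
    by (metis dvd_diff dvd_mult dvd_mult2)
  then show ?thesis
    using assms(3) by (simp add: cong_int_iff[symmetric] cong_iff_dvd_diff)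
qed

theorem theorem6p1:
  fixes p k :: nat and \<phi>' :: "nat \<Rightarrow> nat"
  assumes "prime p" and "odd p"
    and "2 \<le> k" and "k \<le> p - 1"
    and "orthomorphism p \<phi>'"
    and "\<exists>x \<in> {0..<p}. \<phi>' x \<noteq> (k * x) mod p"
  shows "log (real (min k (inv_mod p k))) (real p) + 1
           \<le> real (orth_dist p (\<lambda>x. (k * x) mod p) \<phi>')"
proof -
  define S where "S = {x \<in> {0..<p}. \<phi>' x \<noteq> k * x mod p}"
  define i where "i = inv_mod p k"
  have p: "2 \<le> p" and k: "0 < k" "2 \<le> k" "k < p" using assms(1-4) prime_ge_2_nat by auto
  have coprime: "coprime k p" "coprime (k - 1) p" using assms(1) k by (simp_all add: coprime_of_less_prime)
  note relations = orthomorphism_disagreement_relations[OF assms(5) k(1) coprime, folded S_def]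
  have S: "S \<subseteq> {0..<p}" "S \<noteq> {}" using assms(6) by (auto simp: S_def)
  have ki: "[k * i = 1] (mod p)" unfolding i_def by (rule inv_mod_cong[OF coprime(1)])
  have "2 \<le> i" unfolding i_def using coprime(1) k(2,3) by (rule two_le_inv_mod)
  have "p \<le> i ^ (card S - 1)"
  proof (rule prime_le_power_of_recurrence[OF assms(1) S \<open>2 \<le> i\<close>])
    fix y assume "y \<in> S"
    then obtain a b where ab: "a \<in> S" "b \<in> S" "a \<noteq> y" "[k * a = y + (k - 1) * b] (mod p)"
      using relations(2) by auto
    then show "\<exists>a\<in>S. \<exists>b\<in>S. a \<noteq> y \<and> [i * y = a + (i - 1) * b] (mod p)"
      using cong_rearrange_by_inverse[OF ki _ _ ab(4)] \<open>2 \<le> i\<close> k by auto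
  qed
  moreover have "p \<le> k ^ (card S - 1)"
    using relations(1) k by (intro prime_le_power_of_recurrence[OF assms(1) S]) auto
  ultimately have "log (min k i) p \<le> card S - 1"
    using \<open>2 \<le> i\<close> k p by (intro log_of_power_le) (auto simp: min_def)
  moreover have "orth_dist p (\<lambda>x. k * x mod p) \<phi>' = card S" "1 \<le> card S"
    using S by (auto simp: orth_dist_def S_def Suc_le_eq card_gt_0_iff intro!: arg_cong[of _ _ card])
  ultimately show ?thesis by (simp add: i_def)
qed

end
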